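(* Let $c_0,\delta,\tilde\beta$ be positive constants and consider the Khokhlov–Zabolotskaya–Kuznetsov equation $$E:=\delta p_{ttt}+\tilde\beta\,(p^2)_{tt}-2c_0^3p_{zt}+c_0^4(p_{xx}+p_{yy})=0$$ for $p(x,y,z,t)$. A function $\Lambda(x,y,z,t,p,p_x,p_y,p_z,p_t)$ is a multiplier, i.e. $\mathcal{E}_p[\Lambda E]=0$ identically, if and only if $$\Lambda=\phi(x,y,z)+t\,\psi(x,y,z),\qquad\text{where}\quad \phi_{xx}+\phi_{yy}=\tfrac{2}{c_0}\psi_z,\quad \psi_{xx}+\psi_{yy}=0.$$ For any such $\phi,\psi$, every smooth solution $p$ of $E=0$ satisfies $$\partial_tT^t+\partial_xT^x+\partial_yT^y+\partial_zT^z=0$$ with $$T^t=(\phi+t\psi)(\delta p_{tt}+2\tilde\beta pp_t-2c_0^3p_z)-\psi(\delta p_t+\tilde\beta p^2),$$ $$T^x=c_0^4\big[(\phi+t\psi)p_x-p(\phi_x+t\psi_x)\big],\quad T^y=c_0^4\big[(\phi+t\psi)p_y-p(\phi_y+t\psi_y)\big],\quad T^z=2c_0^3p\psi.$$ In particular, the equation has infinitely many conservation laws.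
   Context: $\mathcal{E}_p=\sum(-D_x)^k(-D_y)^\ell(-D_z)^m(-D_t)^n\,\partial/\partial p_{kx\,\ell y\,mz\,nt}$ is the Euler (variational) operator with respect to $p$, where $D_x,D_y,D_z,D_t$ are total derivatives on the jet space; $\Lambda E$ is a total divergence iff $\mathcal{E}_p[\Lambda E]=0$ identically. Subscripts denote partial derivatives. *)

theory Defs
  imports "HOL-Analysis.Analysis"
begin

type_synonym mi = "nat \<times> nat \<times> nat \<times> nat"   (* multi-index (k,l,m,n) for d_x^k d_y^l d_z^m d_t^n *)

datatype jc = JX | JY | JZ | JT | JP mi
  (* JX..JT: independent variables x,y,z,t;  JP (k,l,m,n): the jet coordinate p_{kx ly mz nt} *)

type_synonym jet = "jc \<Rightarrow> real"

definition pd :: "'c \<Rightarrow> (('c \<Rightarrow> real) \<Rightarrow> real) \<Rightarrow> ('c \<Rightarrow> real) \<Rightarrow> real" where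
  "pd c f u = deriv (\<lambda>s. f (u(c := s))) (u c)"

definition smooth_fun :: "(('c \<Rightarrow> real) \<Rightarrow> real) \<Rightarrow> bool" where
  "smooth_fun f \<longleftrightarrow>
     (\<exists>S. finite S \<and> (\<forall>u v. (\<forall>c\<in>S. u c = v c) \<longrightarrow> f u = f v)) \<and>
     (\<forall>cs. continuous_on UNIV (foldr pd cs f) \<and>
           (\<forall>c u. (\<lambda>s. foldr pd cs f (u(c := s))) differentiable (at (u c))))"

definition MI :: "nat \<Rightarrow> mi set" where
  "MI M = {(k,l,m,n). k + l + m + n \<le> M}"

fun shift :: "jc \<Rightarrow> mi \<Rightarrow> mi" where
  "shift JX (k,l,m,n) = (Suc k,l,m,n)"
| "shift JY (k,l,m,n) = (k,Suc l,m,n)"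
| "shift JZ (k,l,m,n) = (k,l,Suc m,n)"
| "shift JT (k,l,m,n) = (k,l,m,Suc n)"
| "shift (JP a) b = b"

(* total derivative D_c (c one of JX,JY,JZ,JT), exact on functions of jet order \<le> M *)
definition Dtot :: "jc \<Rightarrow> nat \<Rightarrow> (jet \<Rightarrow> real) \<Rightarrow> jet \<Rightarrow> real" where
  "Dtot c M f u = pd c f u + (\<Sum>\<alpha>\<in>MI M. u (JP (shift c \<alpha>)) * pd (JP \<alpha>) f u)"

(* Euler operator w.r.t. p, for a differential function of jet order \<le> N
   (all intermediate functions have order \<le> 2N, so total derivatives with bound 2N are exact) *)
definition Euler :: "nat \<Rightarrow> (jet \<Rightarrow> real) \<Rightarrow> jet \<Rightarrow> real" where
  "Euler N f u = (\<Sum>(k,l,m,n)\<in>MI N. (-1) ^ (k+l+m+n) *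
      ((Dtot JX (2*N) ^^ k) ((Dtot JY (2*N) ^^ l) ((Dtot JZ (2*N) ^^ m)
         ((Dtot JT (2*N) ^^ n) (pd (JP (k,l,m,n)) f))))) u)"

(* the KZK equation as a differential function of order 3:
   E = delta p_ttt + beta (p^2)_tt - 2 c0^3 p_zt + c0^4 (p_xx + p_yy),
   with (p^2)_tt = 2 p p_tt + 2 p_t^2 *)
definition KZK :: "real \<Rightarrow> real \<Rightarrow> real \<Rightarrow> jet \<Rightarrow> real" where
  "KZK c0 \<delta> \<beta> u = \<delta> * u (JP (0,0,0,3))
     + \<beta> * (2 * u (JP (0,0,0,0)) * u (JP (0,0,0,2)) + 2 * (u (JP (0,0,0,1)))^2)
     - 2 * c0^3 * u (JP (0,0,1,1))
     + c0^4 * (u (JP (2,0,0,0)) + u (JP (0,2,0,0)))"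

type_synonym mult = "real \<Rightarrow> real \<Rightarrow> real \<Rightarrow> real \<Rightarrow> real \<Rightarrow> real \<Rightarrow> real \<Rightarrow> real \<Rightarrow> real \<Rightarrow> real"

definition liftL :: "mult \<Rightarrow> jet \<Rightarrow> real" where
  "liftL \<Lambda> u = \<Lambda> (u JX) (u JY) (u JZ) (u JT) (u (JP (0,0,0,0)))
      (u (JP (1,0,0,0))) (u (JP (0,1,0,0))) (u (JP (0,0,1,0))) (u (JP (0,0,0,1)))"

(* multiplier: E_p[Lambda E] = 0 identically (Lambda E has jet order 3) *)
definition is_multiplier :: "real \<Rightarrow> real \<Rightarrow> real \<Rightarrow> mult \<Rightarrow> bool" where
  "is_multiplier c0 \<delta> \<beta> \<Lambda> \<longleftrightarrow>
     (\<forall>u. Euler 3 (\<lambda>v. liftL \<Lambda> v * KZK c0 \<delta> \<beta> v) u = 0)"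

definition smooth3 :: "(real \<Rightarrow> real \<Rightarrow> real \<Rightarrow> real) \<Rightarrow> bool" where
  "smooth3 g \<longleftrightarrow> smooth_fun (\<lambda>u::jet. g (u JX) (u JY) (u JZ))"

definition smooth4 :: "(real \<Rightarrow> real \<Rightarrow> real \<Rightarrow> real \<Rightarrow> real) \<Rightarrow> bool" where
  "smooth4 g \<longleftrightarrow> smooth_fun (\<lambda>u::jet. g (u JX) (u JY) (u JZ) (u JT))"

definition d3x :: "(real \<Rightarrow> real \<Rightarrow> real \<Rightarrow> real) \<Rightarrow> real \<Rightarrow> real \<Rightarrow> real \<Rightarrow> real" where
  "d3x g x y z = deriv (\<lambda>s. g s y z) x"
definition d3y :: "(real \<Rightarrow> real \<Rightarrow> real \<Rightarrow> real) \<Rightarrow> real \<Rightarrow> real \<Rightarrow> real \<Rightarrow> real" where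
  "d3y g x y z = deriv (\<lambda>s. g x s z) y"
definition d3z :: "(real \<Rightarrow> real \<Rightarrow> real \<Rightarrow> real) \<Rightarrow> real \<Rightarrow> real \<Rightarrow> real \<Rightarrow> real" where
  "d3z g x y z = deriv (\<lambda>s. g x y s) z"

definition dX :: "(real \<Rightarrow> real \<Rightarrow> real \<Rightarrow> real \<Rightarrow> real) \<Rightarrow> real \<Rightarrow> real \<Rightarrow> real \<Rightarrow> real \<Rightarrow> real" where
  "dX g x y z t = deriv (\<lambda>s. g s y z t) x"
definition dY :: "(real \<Rightarrow> real \<Rightarrow> real \<Rightarrow> real \<Rightarrow> real) \<Rightarrow> real \<Rightarrow> real \<Rightarrow> real \<Rightarrow> real \<Rightarrow> real" where
  "dY g x y z t = deriv (\<lambda>s. g x s z t) y"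
definition dZ :: "(real \<Rightarrow> real \<Rightarrow> real \<Rightarrow> real \<Rightarrow> real) \<Rightarrow> real \<Rightarrow> real \<Rightarrow> real \<Rightarrow> real \<Rightarrow> real" where
  "dZ g x y z t = deriv (\<lambda>s. g x y s t) z"
definition dT :: "(real \<Rightarrow> real \<Rightarrow> real \<Rightarrow> real \<Rightarrow> real) \<Rightarrow> real \<Rightarrow> real \<Rightarrow> real \<Rightarrow> real \<Rightarrow> real" where
  "dT g x y z t = deriv (\<lambda>s. g x y z s) t"

definition solves_KZK :: "real \<Rightarrow> real \<Rightarrow> real \<Rightarrow> (real \<Rightarrow> real \<Rightarrow> real \<Rightarrow> real \<Rightarrow> real) \<Rightarrow> bool" where
  "solves_KZK c0 \<delta> \<beta> p \<longleftrightarrow> (\<forall>x y z t.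
     \<delta> * dT (dT (dT p)) x y z t
     + \<beta> * dT (dT (\<lambda>x y z t. (p x y z t)^2)) x y z t
     - 2 * c0^3 * dT (dZ p) x y z t
     + c0^4 * (dX (dX p) x y z t + dY (dY p) x y z t) = 0)"

definition Tt :: "real \<Rightarrow> real \<Rightarrow> real \<Rightarrow> (real \<Rightarrow> real \<Rightarrow> real \<Rightarrow> real) \<Rightarrow> (real \<Rightarrow> real \<Rightarrow> real \<Rightarrow> real)
    \<Rightarrow> (real \<Rightarrow> real \<Rightarrow> real \<Rightarrow> real \<Rightarrow> real) \<Rightarrow> real \<Rightarrow> real \<Rightarrow> real \<Rightarrow> real \<Rightarrow> real" where
  "Tt c0 \<delta> \<beta> \<phi> \<psi> p x y z t =
     (\<phi> x y z + t * \<psi> x y z) * (\<delta> * dT (dT p) x y z t + 2 * \<beta> * p x y z t * dT p x y z t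
                                  - 2 * c0^3 * dZ p x y z t)
     - \<psi> x y z * (\<delta> * dT p x y z t + \<beta> * (p x y z t)^2)"

definition Tx :: "real \<Rightarrow> (real \<Rightarrow> real \<Rightarrow> real \<Rightarrow> real) \<Rightarrow> (real \<Rightarrow> real \<Rightarrow> real \<Rightarrow> real)
    \<Rightarrow> (real \<Rightarrow> real \<Rightarrow> real \<Rightarrow> real \<Rightarrow> real) \<Rightarrow> real \<Rightarrow> real \<Rightarrow> real \<Rightarrow> real \<Rightarrow> real" where
  "Tx c0 \<phi> \<psi> p x y z t = c0^4 * ((\<phi> x y z + t * \<psi> x y z) * dX p x y z t
                                  - p x y z t * (d3x \<phi> x y z + t * d3x \<psi> x y z))"

definition Ty :: "real \<Rightarrow> (real \<Rightarrow> real \<Rightarrow> real \<Rightarrow> real) \<Rightarrow> (real \<Rightarrow> real \<Rightarrow> real \<Rightarrow> real)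
    \<Rightarrow> (real \<Rightarrow> real \<Rightarrow> real \<Rightarrow> real \<Rightarrow> real) \<Rightarrow> real \<Rightarrow> real \<Rightarrow> real \<Rightarrow> real \<Rightarrow> real" where
  "Ty c0 \<phi> \<psi> p x y z t = c0^4 * ((\<phi> x y z + t * \<psi> x y z) * dY p x y z t
                                  - p x y z t * (d3y \<phi> x y z + t * d3y \<psi> x y z))"

definition Tz :: "real \<Rightarrow> (real \<Rightarrow> real \<Rightarrow> real \<Rightarrow> real)
    \<Rightarrow> (real \<Rightarrow> real \<Rightarrow> real \<Rightarrow> real \<Rightarrow> real) \<Rightarrow> real \<Rightarrow> real \<Rightarrow> real \<Rightarrow> real \<Rightarrow> real" where
  "Tz c0 \<psi> p x y z t = 2 * c0^3 * p x y z t * \<psi> x y z"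

definition det_eqs :: "real \<Rightarrow> (real \<Rightarrow> real \<Rightarrow> real \<Rightarrow> real) \<Rightarrow> (real \<Rightarrow> real \<Rightarrow> real \<Rightarrow> real) \<Rightarrow> bool" where
  "det_eqs c0 \<phi> \<psi> \<longleftrightarrow> (\<forall>x y z.
     d3x (d3x \<phi>) x y z + d3y (d3y \<phi>) x y z = (2 / c0) * d3z \<psi> x y z \<and>
     d3x (d3x \<psi>) x y z + d3y (d3y \<psi>) x y z = 0)"

end

theory Submission
  imports Defs
begin

text \<open>
  For \<open>\<Lambda>\<close> depending on \<open>x, y, z, t, p\<close> and the first derivatives of \<open>p\<close>,
  \<open>\<E>\<^sub>p[\<Lambda>E]\<close> is computed explicitly.  Its
  coefficients of \<open>p\<^sub>t\<^sub>t\<^sub>t\<^sub>t\<close>, \<open>p\<^sub>x\<^sub>t\<^sub>t\<^sub>t\<close>, \<open>p\<^sub>y\<^sub>t\<^sub>t\<^sub>t\<close>, \<open>p\<^sub>z\<^sub>t\<^sub>t\<^sub>t\<close> are \<open>-2\<delta>\<close> times the derivatives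
  of \<open>\<Lambda>\<close> in \<open>p\<^sub>t, p\<^sub>x, p\<^sub>y, p\<^sub>z\<close>, and then the coefficient \<open>2c\<^sub>0\<^sup>4\<Lambda>\<^sub>p\<close> of \<open>p\<^sub>x\<^sub>x\<close> must vanish,
  so \<open>\<Lambda>\<close> depends on \<open>x, y, z, t\<close> only.  What remains is
  \<open>2\<beta>p\<Lambda>\<^sub>t\<^sub>t - \<delta>\<Lambda>\<^sub>t\<^sub>t\<^sub>t - 2c\<^sub>0\<^sup>3\<Lambda>\<^sub>z\<^sub>t + c\<^sub>0\<^sup>4(\<Lambda>\<^sub>x\<^sub>x + \<Lambda>\<^sub>y\<^sub>y)\<close>; its \<open>p\<close>-coefficient forces
  \<open>\<Lambda> = \<phi> + t\<psi>\<close>, and the rest is exactly the determining system.  For the conservation law,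
  a direct computation gives \<open>div T = (\<phi> + t\<psi>)E - c\<^sub>0\<^sup>4p(\<Delta>\<phi> - 2\<psi>\<^sub>z/c\<^sub>0) - c\<^sub>0\<^sup>4tp\<Delta>\<psi>\<close>.
  The constants are already infinitely many multipliers.
\<close>

section \<open>Partial derivatives on the jet space\<close>

definition coord_differentiable :: "(jet \<Rightarrow> real) \<Rightarrow> bool" where
  "coord_differentiable f \<longleftrightarrow> (\<forall>c u. (\<lambda>s. f (u(c := s))) field_differentiable (at (u c)))"

text \<open>
  \<open>coord_smooth\<close> keeps from \<^const>\<open>smooth_fun\<close> only what the product and sum rules need:
  every iterated partial derivative is differentiable in each coordinate separately.
\<close>

definition coord_smooth :: "(jet \<Rightarrow> real) \<Rightarrow> bool" where
  "coord_smooth f \<longleftrightarrow> (\<forall>cs. coord_differentiable (foldr pd cs f))"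

lemma coord_differentiableD:
  assumes "coord_differentiable f" shows "(\<lambda>s. f (u(c := s))) field_differentiable (at s)"
proof -
  have "(\<lambda>r. f ((u(c := s))(c := r))) field_differentiable (at ((u(c := s)) c))"
    using assms unfolding coord_differentiable_def by blast
  then show ?thesis by simp
qed

lemma coord_differentiable_has_derivative:
  "coord_differentiable f \<Longrightarrow> ((\<lambda>s. f (u(c := s))) has_field_derivative pd c f (u(c := s))) (at s)"
  unfolding pd_def by (simp add: coord_differentiableD DERIV_deriv_iff_field_differentiable)

lemma smooth_fun_imp_coord_smooth:
  assumes "smooth_fun f" shows "coord_smooth f"
proof -
  have "(g::real \<Rightarrow> real) differentiable at x \<longleftrightarrow> g field_differentiable at x" for g x
    using DERIV_deriv_iff_real_differentiable DERIV_deriv_iff_field_differentiable by blast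
  then show ?thesis
    using assms unfolding smooth_fun_def coord_smooth_def coord_differentiable_def by blast
qed

lemma coord_smooth_imp_differentiable: "coord_smooth f \<Longrightarrow> coord_differentiable f"
  unfolding coord_smooth_def by (metis foldr_Nil id_apply)

lemma coord_smooth_pd: "coord_smooth f \<Longrightarrow> coord_smooth (pd c f)"
  unfolding coord_smooth_def
proof
  fix cs assume "\<forall>cs. coord_differentiable (foldr pd cs f)"
  then have "coord_differentiable (foldr pd (cs @ [c]) f)" by blast
  then show "coord_differentiable (foldr pd cs (pd c f))" by simp
qed

lemma coord_differentiable_add:
  "coord_differentiable f \<Longrightarrow> coord_differentiable g \<Longrightarrow> coord_differentiable (\<lambda>u. f u + g u)"
  unfolding coord_differentiable_def by (auto intro!: field_differentiable_add)

lemma coord_differentiable_mult: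
  "coord_differentiable f \<Longrightarrow> coord_differentiable g \<Longrightarrow> coord_differentiable (\<lambda>u. f u * g u)"
  unfolding coord_differentiable_def by (auto intro!: field_differentiable_mult)

lemma coord_differentiable_const: "coord_differentiable (\<lambda>u. k)"
  unfolding coord_differentiable_def by auto

lemma coord_differentiable_coord: "coord_differentiable (\<lambda>u. u c)"
proof -
  have "(\<lambda>s. (u(c' := s)) c) field_differentiable at (u c')" for u :: jet and c'
    by (cases "c = c'") simp_all
  then show ?thesis unfolding coord_differentiable_def by blast
qed

lemma pd_add:
  "coord_differentiable f \<Longrightarrow> coord_differentiable g \<Longrightarrow>
    pd c (\<lambda>u. f u + g u) = (\<lambda>u. pd c f u + pd c g u)"
  unfolding pd_def coord_differentiable_def fun_eq_iff by (auto intro!: deriv_add)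

lemma pd_diff:
  "coord_differentiable f \<Longrightarrow> coord_differentiable g \<Longrightarrow>
    pd c (\<lambda>u. f u - g u) = (\<lambda>u. pd c f u - pd c g u)"
  unfolding pd_def coord_differentiable_def fun_eq_iff by (auto intro!: deriv_diff)

lemma pd_mult:
  "coord_differentiable f \<Longrightarrow> coord_differentiable g \<Longrightarrow>
    pd c (\<lambda>u. f u * g u) = (\<lambda>u. pd c f u * g u + f u * pd c g u)"
  unfolding pd_def coord_differentiable_def fun_eq_iff by auto

lemma pd_minus: "coord_differentiable f \<Longrightarrow> pd c (\<lambda>u. - f u) = (\<lambda>u. - pd c f u)"
  unfolding pd_def coord_differentiable_def fun_eq_iff by (auto intro!: deriv_minus)

lemma pd_const: "pd c (\<lambda>u. k) = (\<lambda>u. 0)"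
  unfolding pd_def by simp

lemma pd_coord: "pd c (\<lambda>u. u c') = (\<lambda>u. if c' = c then 1 else 0)"
  unfolding pd_def fun_eq_iff by auto

text \<open>
  Closure of \<^const>\<open>coord_smooth\<close> under sums and products: this class is closed under
  \<^const>\<open>pd\<close> by the sum and product rules, so all its members are \<^const>\<open>coord_smooth\<close>.
\<close>

inductive smooth_closure :: "(jet \<Rightarrow> real) \<Rightarrow> bool" where
  "coord_smooth f \<Longrightarrow> smooth_closure f"
| "smooth_closure f \<Longrightarrow> smooth_closure g \<Longrightarrow> smooth_closure (\<lambda>u. f u + g u)"
| "smooth_closure f \<Longrightarrow> smooth_closure g \<Longrightarrow> smooth_closure (\<lambda>u. f u * g u)"
| "smooth_closure (\<lambda>u. k)"
| "smooth_closure (\<lambda>u. u c)"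

lemma smooth_closure_pd:
  "smooth_closure f \<Longrightarrow> coord_differentiable f \<and> (\<forall>c. smooth_closure (pd c f))"
proof (induction rule: smooth_closure.induct)
  case (1 f)
  then show ?case
    by (simp add: coord_smooth_imp_differentiable coord_smooth_pd smooth_closure.intros(1))
next
  case (2 f g)
  then show ?case by (simp add: coord_differentiable_add pd_add smooth_closure.intros(2))
next
  case (3 f g)
  then show ?case by (simp add: coord_differentiable_mult pd_mult smooth_closure.intros(2,3))
next
  case (4 k)
  then show ?case by (simp add: coord_differentiable_const pd_const smooth_closure.intros(4))
next
  case (5 c)
  then show ?case by (simp add: coord_differentiable_coord pd_coord smooth_closure.intros(4))
qed

lemma smooth_closure_imp_coord_smooth:
  assumes "smooth_closure f" shows "coord_smooth f"
proof -
  have "smooth_closure (foldr pd cs f)" for cs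
    by (induction cs) (use assms smooth_closure_pd in auto)
  then show ?thesis unfolding coord_smooth_def using smooth_closure_pd by blast
qed

lemma coord_smooth_add [simp]: "coord_smooth f \<Longrightarrow> coord_smooth g \<Longrightarrow> coord_smooth (\<lambda>u. f u + g u)"
  by (rule smooth_closure_imp_coord_smooth, rule smooth_closure.intros(2);
      rule smooth_closure.intros(1))

lemma coord_smooth_mult [simp]: "coord_smooth f \<Longrightarrow> coord_smooth g \<Longrightarrow> coord_smooth (\<lambda>u. f u * g u)"
  by (rule smooth_closure_imp_coord_smooth, rule smooth_closure.intros(3);
      rule smooth_closure.intros(1))

lemma coord_smooth_const [simp]: "coord_smooth (\<lambda>u. k)"
  by (rule smooth_closure_imp_coord_smooth, rule smooth_closure.intros(4))

lemma coord_smooth_coord [simp]: "coord_smooth (\<lambda>u. u c)"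
  by (rule smooth_closure_imp_coord_smooth, rule smooth_closure.intros(5))

lemma coord_smooth_minus [simp]: "coord_smooth f \<Longrightarrow> coord_smooth (\<lambda>u. - f u)"
  using coord_smooth_mult[OF coord_smooth_const[of "-1"]] by simp

lemma coord_smooth_diff [simp]: "coord_smooth f \<Longrightarrow> coord_smooth g \<Longrightarrow> coord_smooth (\<lambda>u. f u - g u)"
  using coord_smooth_add[OF _ coord_smooth_minus] by simp

lemma pd_upd_other: "c' \<noteq> c \<Longrightarrow> pd c' (\<lambda>u. f (u(c := k))) = (\<lambda>u. pd c' f (u(c := k)))"
  unfolding pd_def by (simp add: fun_upd_twist)

lemma pd_upd_same: "pd c (\<lambda>u. f (u(c := k))) = (\<lambda>u. 0)"
  unfolding pd_def by simp

lemma coord_differentiable_upd: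
  "coord_differentiable f \<Longrightarrow> coord_differentiable (\<lambda>u. f (u(c := k)))"
  unfolding coord_differentiable_def
proof (intro allI)
  fix c' u assume diff: "\<forall>c u. (\<lambda>s. f (u(c := s))) field_differentiable at (u c)"
  show "(\<lambda>s. f (u(c' := s, c := k))) field_differentiable at (u c')"
  proof (cases "c' = c")
    case False
    then have "(\<lambda>s. f (u(c' := s, c := k))) = (\<lambda>s. f ((u(c := k))(c' := s)))"
      by (simp add: fun_upd_twist)
    then show ?thesis using diff False by (metis fun_upd_other)
  qed simp
qed

lemma coord_smooth_upd:
  assumes "coord_smooth f" shows "coord_smooth (\<lambda>u. f (u(c := k)))"
proof -
  define F where "F = (\<lambda>u. f (u(c := k)))"
  have "foldr pd cs F = (\<lambda>u. 0) \<or> foldr pd cs F = (\<lambda>u. foldr pd cs f (u(c := k)))" for cs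
  proof (induction cs)
    case (Cons c' cs)
    then show ?case
    proof
      assume "foldr pd cs F = (\<lambda>u. 0)"
      then show ?case by (simp add: pd_const)
    next
      assume IH: "foldr pd cs F = (\<lambda>u. foldr pd cs f (u(c := k)))"
      show ?case
      proof (cases "c' = c")
        case True
        then show ?thesis unfolding foldr_Cons o_apply IH by (simp only: pd_upd_same simp_thms)
      next
        case False
        then show ?thesis unfolding foldr_Cons o_apply IH by (simp only: pd_upd_other simp_thms)
      qed
    qed
  qed (simp only: F_def foldr_Nil id_apply simp_thms)
  moreover have "coord_differentiable (foldr pd cs f)" for cs
    using assms unfolding coord_smooth_def by blast
  ultimately show ?thesis
    unfolding coord_smooth_def F_def[symmetric]
    by (metis coord_differentiable_upd coord_differentiable_const)
qed

section \<open>Functions of finitely many jet coordinates\<close>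

definition depends_only :: "jc set \<Rightarrow> (jet \<Rightarrow> real) \<Rightarrow> bool" where
  "depends_only S f \<longleftrightarrow> (\<forall>u v. (\<forall>c\<in>S. u c = v c) \<longrightarrow> f u = f v)"

lemma depends_only_upd: "depends_only S f \<Longrightarrow> c \<notin> S \<Longrightarrow> f (u(c := s)) = f u"
  unfolding depends_only_def by auto

lemma pd_eq_0_if_not_depends: "depends_only S f \<Longrightarrow> c \<notin> S \<Longrightarrow> pd c f = (\<lambda>u. 0)"
  unfolding pd_def by (simp add: depends_only_upd)

lemma depends_only_pd:
  assumes f: "depends_only S f" shows "depends_only S (pd c f)"
proof (cases "c \<in> S")
  case True
  show ?thesis unfolding depends_only_def
  proof (intro allI impI)
    fix u v :: jet assume uv: "\<forall>c\<in>S. u c = v c"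
    have "f (u(c := s)) = f (v(c := s))" for s
      by (rule f[unfolded depends_only_def, rule_format]) (use uv in auto)
    moreover have "u c = v c" using uv True by blast
    ultimately show "pd c f u = pd c f v" unfolding pd_def by presburger
  qed
next
  case False
  then show ?thesis using pd_eq_0_if_not_depends[OF f] by (simp add: depends_only_def)
qed

lemma depends_only_remove:
  assumes f: "depends_only S f" and "coord_differentiable f" and "pd c f = (\<lambda>u. 0)"
  shows "depends_only (S - {c}) f"
proof -
  have "((\<lambda>s. f (u(c := s))) has_field_derivative 0) (at s)" for u s
    using coord_differentiable_has_derivative[OF assms(2), of u c s] assms(3) by simp
  then have const: "f (u(c := s)) = f (u(c := r))" for u s r
    using DERIV_isconst_all by blast
  show ?thesis unfolding depends_only_def
  proof (intro allI impI)
    fix u v :: jet assume uv: "\<forall>c'\<in>S - {c}. u c' = v c'"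
    have "f u = f (u(c := v c))" using const[of u "u c" "v c"] by simp
    also have "\<dots> = f v"
      by (rule f[unfolded depends_only_def, rule_format]) (use uv in auto)
    finally show "f u = f v" .
  qed
qed

definition first_order_indices :: "mi set" where
  "first_order_indices = {(0,0,0,0), (1,0,0,0), (0,1,0,0), (0,0,1,0), (0,0,0,1)}"

definition first_order_coords :: "jc set" where
  "first_order_coords = {JX, JY, JZ, JT} \<union> JP ` first_order_indices"

lemma JP_in_first_order_coords: "JP a \<in> first_order_coords \<longleftrightarrow> a \<in> first_order_indices"
  unfolding first_order_coords_def by auto

lemma depends_only_liftL: "depends_only first_order_coords (liftL \<Lambda>)"
  unfolding depends_only_def liftL_def first_order_coords_def first_order_indices_def by simp

lemma finite_MI: "finite (MI M)"
proof -
  have "MI M \<subseteq> {..M} \<times> {..M} \<times> {..M} \<times> {..M}" unfolding MI_def by auto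
  then show ?thesis by (rule finite_subset) auto
qed

section \<open>Total derivatives and the Euler operator\<close>

lemma Dtot_add:
  "coord_smooth f \<Longrightarrow> coord_smooth g \<Longrightarrow> Dtot c M (\<lambda>u. f u + g u) = (\<lambda>u. Dtot c M f u + Dtot c M g u)"
  unfolding Dtot_def
  by (simp add: coord_smooth_imp_differentiable pd_add sum.distrib algebra_simps)

lemma Dtot_diff:
  "coord_smooth f \<Longrightarrow> coord_smooth g \<Longrightarrow> Dtot c M (\<lambda>u. f u - g u) = (\<lambda>u. Dtot c M f u - Dtot c M g u)"
  unfolding Dtot_def
  by (simp add: coord_smooth_imp_differentiable pd_diff sum_subtractf algebra_simps)

lemma Dtot_minus: "coord_smooth f \<Longrightarrow> Dtot c M (\<lambda>u. - f u) = (\<lambda>u. - Dtot c M f u)"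
  unfolding Dtot_def
  by (simp add: coord_smooth_imp_differentiable pd_minus sum_negf algebra_simps)

lemma Dtot_mult:
  "coord_smooth f \<Longrightarrow> coord_smooth g \<Longrightarrow>
    Dtot c M (\<lambda>u. f u * g u) = (\<lambda>u. Dtot c M f u * g u + f u * Dtot c M g u)"
  unfolding Dtot_def
  by (simp add: coord_smooth_imp_differentiable pd_mult sum.distrib sum_distrib_left
      sum_distrib_right algebra_simps)

lemma Dtot_const: "Dtot c M (\<lambda>u. k) = (\<lambda>u. 0)"
  unfolding Dtot_def by (simp add: pd_const)

lemma Dtot_coord:
  assumes "\<alpha> \<in> MI M" "c \<in> {JX, JY, JZ, JT}"
  shows "Dtot c M (\<lambda>u. u (JP \<alpha>)) = (\<lambda>u. u (JP (shift c \<alpha>)))"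
proof
  fix u
  have "Dtot c M (\<lambda>u. u (JP \<alpha>)) u = (\<Sum>\<beta>\<in>MI M. if \<alpha> = \<beta> then u (JP (shift c \<beta>)) else 0)"
    unfolding Dtot_def pd_coord using assms by (auto intro!: sum.cong)
  also have "\<dots> = u (JP (shift c \<alpha>))" using assms finite_MI by (simp add: sum.delta)
  finally show "Dtot c M (\<lambda>u. u (JP \<alpha>)) u = u (JP (shift c \<alpha>))" .
qed

lemma Dtot_first_order:
  assumes g: "depends_only first_order_coords g" and "1 \<le> M"
  shows "Dtot c M g = (\<lambda>u. pd c g u
     + u (JP (shift c (0,0,0,0))) * pd (JP (0,0,0,0)) g u
     + u (JP (shift c (1,0,0,0))) * pd (JP (1,0,0,0)) g u
     + u (JP (shift c (0,1,0,0))) * pd (JP (0,1,0,0)) g u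
     + u (JP (shift c (0,0,1,0))) * pd (JP (0,0,1,0)) g u
     + u (JP (shift c (0,0,0,1))) * pd (JP (0,0,0,1)) g u)"
proof -
  have "(\<Sum>\<alpha>\<in>MI M. u (JP (shift c \<alpha>)) * pd (JP \<alpha>) g u)
      = (\<Sum>\<alpha>\<in>first_order_indices. u (JP (shift c \<alpha>)) * pd (JP \<alpha>) g u)" for u
  proof (rule sum.mono_neutral_right[OF finite_MI])
    show "first_order_indices \<subseteq> MI M"
      using \<open>1 \<le> M\<close> unfolding first_order_indices_def MI_def by auto
    show "\<forall>\<alpha>\<in>MI M - first_order_indices. u (JP (shift c \<alpha>)) * pd (JP \<alpha>) g u = 0"
      using pd_eq_0_if_not_depends[OF g] JP_in_first_order_coords by auto
  qed
  then show ?thesis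
    unfolding Dtot_def by (auto simp: first_order_indices_def add.assoc)
qed

lemma funpow_Dtot_zero: "(Dtot c M ^^ k) (\<lambda>u. 0) = (\<lambda>u. 0)"
  by (induction k) (auto simp: Dtot_const)

lemma Euler_eq_sum_support:
  assumes "S \<subseteq> MI N" and "\<forall>\<alpha>\<in>MI N - S. pd (JP \<alpha>) f = (\<lambda>u. 0)"
  shows "Euler N f u = (\<Sum>(k,l,m,n)\<in>S. (-1) ^ (k+l+m+n) *
      ((Dtot JX (2*N) ^^ k) ((Dtot JY (2*N) ^^ l) ((Dtot JZ (2*N) ^^ m)
         ((Dtot JT (2*N) ^^ n) (pd (JP (k,l,m,n)) f))))) u)"
  unfolding Euler_def
  by (rule sum.mono_neutral_right[OF finite_MI assms(1)])
    (use assms(2) in \<open>auto simp: funpow_Dtot_zero\<close>)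

lemma KZK_eq: "KZK c0 \<delta> \<beta> = (\<lambda>u. \<delta> * u (JP (0,0,0,3))
     + \<beta> * (2 * u (JP (0,0,0,0)) * u (JP (0,0,0,2)) + 2 * (u (JP (0,0,0,1)) * u (JP (0,0,0,1))))
     - 2 * c0^3 * u (JP (0,0,1,1))
     + c0^4 * (u (JP (2,0,0,0)) + u (JP (0,2,0,0))))"
  unfolding KZK_def by (simp add: power2_eq_square)

lemma coord_smooth_KZK: "coord_smooth (KZK c0 \<delta> \<beta>)"
  unfolding KZK_eq by simp

definition euler_KZK :: "real \<Rightarrow> real \<Rightarrow> real \<Rightarrow> (jet \<Rightarrow> real) \<Rightarrow> jet \<Rightarrow> real" where
  "euler_KZK c0 \<delta> \<beta> g = Euler 3 (\<lambda>v. g v * KZK c0 \<delta> \<beta> v)"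

lemma euler_KZK_ten_terms:
  fixes c0 \<delta> \<beta> :: real
  assumes "coord_smooth g" and "depends_only first_order_coords g"
  defines "f \<equiv> \<lambda>v. g v * KZK c0 \<delta> \<beta> v"
  shows "euler_KZK c0 \<delta> \<beta> g u =
      pd (JP (0,0,0,0)) f u
    - Dtot JX 6 (pd (JP (1,0,0,0)) f) u
    - Dtot JY 6 (pd (JP (0,1,0,0)) f) u
    - Dtot JZ 6 (pd (JP (0,0,1,0)) f) u
    - Dtot JT 6 (pd (JP (0,0,0,1)) f) u
    + Dtot JT 6 (Dtot JT 6 (pd (JP (0,0,0,2)) f)) u
    - Dtot JT 6 (Dtot JT 6 (Dtot JT 6 (pd (JP (0,0,0,3)) f))) u
    + Dtot JZ 6 (Dtot JT 6 (pd (JP (0,0,1,1)) f)) u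
    + Dtot JX 6 (Dtot JX 6 (pd (JP (2,0,0,0)) f)) u
    + Dtot JY 6 (Dtot JY 6 (pd (JP (0,2,0,0)) f)) u"
proof -
  define S where "S = first_order_indices \<union> {(0,0,0,2),(0,0,0,3),(0,0,1,1),(2,0,0,0),(0,2,0,0)}"
  have S_MI: "S \<subseteq> MI 3" unfolding S_def first_order_indices_def MI_def by auto
  have f_support: "\<forall>\<alpha>\<in>MI 3 - S. pd (JP \<alpha>) f = (\<lambda>u. 0)"
  proof
    fix \<alpha> assume \<alpha>: "\<alpha> \<in> MI 3 - S"
    have "depends_only (JP ` S) (KZK c0 \<delta> \<beta>)"
      unfolding depends_only_def KZK_def S_def first_order_indices_def by simp
    moreover have "JP \<alpha> \<notin> JP ` S" "JP \<alpha> \<notin> first_order_coords"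
      using \<alpha> by (auto simp: JP_in_first_order_coords S_def)
    ultimately have "pd (JP \<alpha>) g = (\<lambda>u. 0)" "pd (JP \<alpha>) (KZK c0 \<delta> \<beta>) = (\<lambda>u. 0)"
      using pd_eq_0_if_not_depends assms(2) by blast+
    then show "pd (JP \<alpha>) f = (\<lambda>u. 0)"
      unfolding f_def using assms(1) coord_smooth_KZK
      by (simp add: pd_mult coord_smooth_imp_differentiable)
  qed
  show ?thesis
    unfolding euler_KZK_def f_def[symmetric] Euler_eq_sum_support[OF S_MI f_support]
    by (simp add: S_def first_order_indices_def eval_nat_numeral algebra_simps)
qed

section \<open>The determining equations of a multiplier\<close>

text \<open>
  The Euler expression is affine in each of the jet coordinates used below, so its coefficient
  of such a coordinate \<open>c\<close> is the jump \<open>f (u(c := 1)) - f (u(c := 0))\<close>.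
\<close>

definition jump :: "jet \<Rightarrow> jc \<Rightarrow> (jet \<Rightarrow> real) \<Rightarrow> real" where
  "jump u c f = f (u(c := 1)) - f (u(c := 0))"

lemma jump_add: "jump u c (\<lambda>v. f v + g v) = jump u c f + jump u c g"
  unfolding jump_def by simp

lemma jump_diff: "jump u c (\<lambda>v. f v - g v) = jump u c f - jump u c g"
  unfolding jump_def by simp

lemma jump_minus: "jump u c (\<lambda>v. - f v) = - jump u c f"
  unfolding jump_def by simp

text \<open>
  The case distinction lets the simplifier skip evaluating a factor whose jump vanishes.
\<close>

lemma jump_mult:
  "jump u c (\<lambda>v. f v * g v) =
    (if jump u c f = 0 then (if jump u c g = 0 then 0 else f (u(c := 0)) * jump u c g)
     else jump u c f * g (u(c := 1)) + f (u(c := 0)) * jump u c g)"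
  unfolding jump_def by (auto simp: algebra_simps)

lemma jump_const: "jump u c (\<lambda>v. k) = 0"
  unfolding jump_def by simp

lemma jump_coord: "jump u c (\<lambda>v. v c') = (if c' = c then 1 else 0)"
  unfolding jump_def by simp

lemma jump_eq_0_if_not_depends: "depends_only S f \<Longrightarrow> c \<notin> S \<Longrightarrow> jump u c f = 0"
  unfolding jump_def by (simp add: depends_only_upd)

text \<open>
  Jumps are taken at \<open>first_order_part u\<close>, where all jet coordinates of order \<open>\<ge> 2\<close> vanish:
  this kills almost all terms of the expanded Euler expression.
\<close>

definition first_order_part :: "jet \<Rightarrow> jet" where
  "first_order_part u = (\<lambda>c. if c \<in> first_order_coords then u c else 0)"

lemma first_order_part_apply:
  "first_order_part u c = (if c \<in> first_order_coords then u c else 0)"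
  unfolding first_order_part_def by simp

lemma depends_only_first_order_part:
  "depends_only first_order_coords f \<Longrightarrow> f (first_order_part u) = f u"
  unfolding depends_only_def first_order_part_def by simp

lemmas jump_simps = jump_add jump_diff jump_minus jump_mult jump_const jump_coord
  jump_eq_0_if_not_depends[of first_order_coords]

context
  fixes g :: "jet \<Rightarrow> real" and c0 \<delta> \<beta> :: real
  assumes g_smooth [simp]: "coord_smooth g"
    and g_first_order [simp]: "depends_only first_order_coords g"
begin

declare coord_smooth_pd [simp] depends_only_pd [simp] pd_const [simp] pd_coord [simp]
  pd_add [OF coord_smooth_imp_differentiable coord_smooth_imp_differentiable, simp]
  pd_diff [OF coord_smooth_imp_differentiable coord_smooth_imp_differentiable, simp]
  pd_mult [OF coord_smooth_imp_differentiable coord_smooth_imp_differentiable, simp]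
  pd_minus [OF coord_smooth_imp_differentiable, simp]
  Dtot_add [simp] Dtot_diff [simp] Dtot_minus [simp] Dtot_mult [simp] Dtot_const [simp]
  Dtot_coord [simp] Dtot_first_order [OF g_first_order, simp]
  Dtot_first_order [OF depends_only_pd, simp]
  pd_eq_0_if_not_depends [of first_order_coords, simp]
  JP_in_first_order_coords [simp] first_order_indices_def [simp] MI_def [simp]

lemmas euler_KZK_expanded =
  euler_KZK_ten_terms[OF g_smooth g_first_order, of c0 \<delta> \<beta>, unfolded KZK_eq, simplified, abs_def]

lemma jump_euler_KZK_fourth_order:
  assumes "c \<in> {JX, JY, JZ, JT}"
  shows "jump (first_order_part u) (JP (shift c (0,0,0,3))) (euler_KZK c0 \<delta> \<beta> g)
           = - 2 * \<delta> * pd (JP (shift c (0,0,0,0))) g u"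
proof -
  from assms consider "c = JX" | "c = JY" | "c = JZ" | "c = JT" by blast
  then show ?thesis unfolding euler_KZK_expanded
    by cases (simp_all add: jump_simps depends_only_upd[of first_order_coords]
      first_order_part_apply depends_only_first_order_part)
qed

lemma jump_euler_KZK_second_order:
  assumes g_xyztp: "depends_only (insert (JP (0,0,0,0)) {JX, JY, JZ, JT}) g"
  shows "jump (first_order_part u) (JP (2,0,0,0)) (euler_KZK c0 \<delta> \<beta> g)
           = 2 * c0^4 * pd (JP (0,0,0,0)) g u"
  unfolding euler_KZK_expanded
  by (simp add: jump_simps depends_only_upd[of first_order_coords]
      first_order_part_apply depends_only_first_order_part
      pd_eq_0_if_not_depends[of "insert (JP (0,0,0,0)) {JX, JY, JZ, JT}"] g_xyztp)

lemma euler_KZK_if_depends_xyzt: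
  assumes g_xyzt: "depends_only {JX, JY, JZ, JT} g"
  shows "euler_KZK c0 \<delta> \<beta> g u = 2 * \<beta> * u (JP (0,0,0,0)) * pd JT (pd JT g) u
     - \<delta> * pd JT (pd JT (pd JT g)) u - 2 * c0^3 * pd JZ (pd JT g) u
     + c0^4 * (pd JX (pd JX g) u + pd JY (pd JY g) u)"
  unfolding euler_KZK_expanded
  by (simp add: pd_eq_0_if_not_depends[of "{JX, JY, JZ, JT}"] g_xyzt eval_nat_numeral algebra_simps)

lemma euler_KZK_eq_0D:
  assumes EL: "euler_KZK c0 \<delta> \<beta> g = (\<lambda>u. 0)" and "c0 \<noteq> 0" "\<delta> \<noteq> 0" "\<beta> \<noteq> 0"
  shows "depends_only {JX, JY, JZ, JT} g" and "pd JT (pd JT g) = (\<lambda>u. 0)"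
proof -
  have jump_0: "jump u c (euler_KZK c0 \<delta> \<beta> g) = 0" for u c
    using EL by (simp add: jump_def)
  have pd_shift_0: "pd (JP (shift c (0,0,0,0))) g = (\<lambda>u. 0)" if "c \<in> {JX, JY, JZ, JT}" for c
    using jump_euler_KZK_fourth_order[OF that] jump_0 \<open>\<delta> \<noteq> 0\<close> by (simp add: fun_eq_iff)
  have "pd (JP (1,0,0,0)) g = (\<lambda>u. 0)" "pd (JP (0,1,0,0)) g = (\<lambda>u. 0)"
    "pd (JP (0,0,1,0)) g = (\<lambda>u. 0)" "pd (JP (0,0,0,1)) g = (\<lambda>u. 0)"
    using pd_shift_0[of JX] pd_shift_0[of JY] pd_shift_0[of JZ] pd_shift_0[of JT] by simp_all
  then have "depends_only (first_order_coords - {JP (1,0,0,0)} - {JP (0,1,0,0)} - {JP (0,0,1,0)}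
      - {JP (0,0,0,1)}) g"
    by (intro depends_only_remove) (simp_all add: coord_smooth_imp_differentiable)
  moreover have "first_order_coords - {JP (1,0,0,0)} - {JP (0,1,0,0)} - {JP (0,0,1,0)}
      - {JP (0,0,0,1)} = insert (JP (0,0,0,0)) {JX, JY, JZ, JT}"
    unfolding first_order_coords_def by auto
  ultimately have g_xyztp: "depends_only (insert (JP (0,0,0,0)) {JX, JY, JZ, JT}) g"
    by simp
  have "pd (JP (0,0,0,0)) g = (\<lambda>u. 0)"
    using jump_euler_KZK_second_order[OF g_xyztp] jump_0 \<open>c0 \<noteq> 0\<close> by (simp add: fun_eq_iff)
  from depends_only_remove[OF g_xyztp _ this]
  show g_xyzt: "depends_only {JX, JY, JZ, JT} g"
    by (simp add: coord_smooth_imp_differentiable insert_Diff_if)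
  have "2 * \<beta> * pd JT (pd JT g) u = 0" for u
  proof -
    have "jump u (JP (0,0,0,0)) (euler_KZK c0 \<delta> \<beta> g) = 2 * \<beta> * pd JT (pd JT g) u"
      unfolding jump_def euler_KZK_if_depends_xyzt[OF g_xyzt]
      by (simp add: depends_only_upd[of "{JX, JY, JZ, JT}"] g_xyzt algebra_simps)
    then show ?thesis using jump_0 by simp
  qed
  then show "pd JT (pd JT g) = (\<lambda>u. 0)" using \<open>\<beta> \<noteq> 0\<close> by auto
qed

end

lemma affine_in_coord:
  assumes "coord_differentiable f" "coord_differentiable (pd c f)" "pd c (pd c f) = (\<lambda>u. 0)"
  shows "f u = f (u(c := 0)) + u c * jump u c f"
proof -
  define h where "h s = f (u(c := s))" for s
  have "((\<lambda>s. pd c f (u(c := s))) has_field_derivative 0) (at s)" for s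
    using coord_differentiable_has_derivative[OF assms(2), of u c s] assms(3) by simp
  then have "pd c f (u(c := s)) = pd c f (u(c := 0))" for s
    using DERIV_isconst_all by blast
  then have "(h has_field_derivative pd c f (u(c := 0))) (at s)" for s
    using coord_differentiable_has_derivative[OF assms(1), of u c s] unfolding h_def by metis
  then have "h b - h a = (b - a) * pd c f (u(c := 0))" for a b
    by (cases "a = b") (auto intro: DERIV_const_ratio_const)
  from this[where a = 0 and b = "u c"] this[where a = 0 and b = 1]
  have "h (u c) - h 0 = u c * (h 1 - h 0)"
    by (simp only: diff_zero mult_1)
  then show ?thesis
    unfolding h_def jump_def by (simp add: algebra_simps)
qed

lemma pd_xyz_JX: "pd JX (\<lambda>u. \<phi> (u JX) (u JY) (u JZ)) = (\<lambda>u. d3x \<phi> (u JX) (u JY) (u JZ))"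
  unfolding pd_def d3x_def by simp

lemma pd_xyz_JY: "pd JY (\<lambda>u. \<phi> (u JX) (u JY) (u JZ)) = (\<lambda>u. d3y \<phi> (u JX) (u JY) (u JZ))"
  unfolding pd_def d3y_def by simp

lemma pd_xyz_JZ: "pd JZ (\<lambda>u. \<phi> (u JX) (u JY) (u JZ)) = (\<lambda>u. d3z \<phi> (u JX) (u JY) (u JZ))"
  unfolding pd_def d3z_def by simp

lemma pd_xyz_JT: "pd JT (\<lambda>u. \<phi> (u JX) (u JY) (u JZ)) = (\<lambda>u. 0)"
  unfolding pd_def by simp

lemma pd_xyz_JP: "pd (JP a) (\<lambda>u. \<phi> (u JX) (u JY) (u JZ)) = (\<lambda>u. 0)"
  unfolding pd_def by simp

lemma coord_smooth_d3x:
  "coord_smooth (\<lambda>u. \<phi> (u JX) (u JY) (u JZ)) \<Longrightarrow> coord_smooth (\<lambda>u. d3x \<phi> (u JX) (u JY) (u JZ))"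
  by (drule coord_smooth_pd[where c = JX]) (simp only: pd_xyz_JX)

lemma coord_smooth_d3y:
  "coord_smooth (\<lambda>u. \<phi> (u JX) (u JY) (u JZ)) \<Longrightarrow> coord_smooth (\<lambda>u. d3y \<phi> (u JX) (u JY) (u JZ))"
  by (drule coord_smooth_pd[where c = JY]) (simp only: pd_xyz_JY)

lemma coord_smooth_d3z:
  "coord_smooth (\<lambda>u. \<phi> (u JX) (u JY) (u JZ)) \<Longrightarrow> coord_smooth (\<lambda>u. d3z \<phi> (u JX) (u JY) (u JZ))"
  by (drule coord_smooth_pd[where c = JZ]) (simp only: pd_xyz_JZ)

lemmas pd_xyz_simps = pd_xyz_JX pd_xyz_JY pd_xyz_JZ pd_xyz_JT pd_xyz_JP
  coord_smooth_d3x coord_smooth_d3y coord_smooth_d3z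

lemma euler_KZK_affine:
  fixes \<phi> \<psi> :: "real \<Rightarrow> real \<Rightarrow> real \<Rightarrow> real"
  assumes [simp]: "coord_smooth (\<lambda>u. \<phi> (u JX) (u JY) (u JZ))"
    and [simp]: "coord_smooth (\<lambda>u. \<psi> (u JX) (u JY) (u JZ))"
  shows "euler_KZK c0 \<delta> \<beta> (\<lambda>u. \<phi> (u JX) (u JY) (u JZ) + u JT * \<psi> (u JX) (u JY) (u JZ)) u
    = c0^4 * (d3x (d3x \<phi>) (u JX) (u JY) (u JZ) + d3y (d3y \<phi>) (u JX) (u JY) (u JZ)
        + u JT * (d3x (d3x \<psi>) (u JX) (u JY) (u JZ) + d3y (d3y \<psi>) (u JX) (u JY) (u JZ)))
      - 2 * c0^3 * d3z \<psi> (u JX) (u JY) (u JZ)"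
proof -
  let ?g = "\<lambda>u. \<phi> (u JX) (u JY) (u JZ) + u JT * \<psi> (u JX) (u JY) (u JZ)"
  have "coord_smooth ?g" by simp
  moreover have "depends_only first_order_coords ?g"
    unfolding depends_only_def first_order_coords_def by simp
  moreover have "depends_only {JX, JY, JZ, JT} ?g"
    unfolding depends_only_def by simp
  ultimately show ?thesis
    by (simp add: euler_KZK_if_depends_xyzt pd_add pd_mult coord_smooth_imp_differentiable
        pd_coord pd_const pd_xyz_simps algebra_simps)
qed

lemma euler_KZK_affine_eq_0_iff:
  fixes \<phi> \<psi> :: "real \<Rightarrow> real \<Rightarrow> real \<Rightarrow> real"
  assumes "c0 \<noteq> 0"
    and "coord_smooth (\<lambda>u. \<phi> (u JX) (u JY) (u JZ))" "coord_smooth (\<lambda>u. \<psi> (u JX) (u JY) (u JZ))"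
  shows "euler_KZK c0 \<delta> \<beta> (\<lambda>u. \<phi> (u JX) (u JY) (u JZ) + u JT * \<psi> (u JX) (u JY) (u JZ)) = (\<lambda>u. 0)
    \<longleftrightarrow> det_eqs c0 \<phi> \<psi>"
proof -
  have c0: "c0^4 * a = 2 * c0^3 * b \<longleftrightarrow> a = 2 / c0 * b" for a b
  proof -
    have "c0^4 * a = 2 * c0^3 * b \<longleftrightarrow> c0^3 * (c0 * a) = c0^3 * (2 * b)"
      by (simp add: eval_nat_numeral algebra_simps)
    then show ?thesis
      using \<open>c0 \<noteq> 0\<close> by (simp add: field_simps)
  qed
  then have c0': "c0^4 * (2 / c0 * b) = 2 * c0^3 * b" for b
    by blast
  show ?thesis
  proof
    assume EL: "euler_KZK c0 \<delta> \<beta> (\<lambda>u. \<phi> (u JX) (u JY) (u JZ) + u JT * \<psi> (u JX) (u JY) (u JZ))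
      = (\<lambda>u. 0)"
    have E: "c0^4 * (d3x (d3x \<phi>) x y z + d3y (d3y \<phi>) x y z
        + t * (d3x (d3x \<psi>) x y z + d3y (d3y \<psi>) x y z)) = 2 * c0^3 * d3z \<psi> x y z" for x y z t
      using EL euler_KZK_affine[OF assms(2,3), of c0 \<delta> \<beta>
          "(\<lambda>_. 0)(JX := x, JY := y, JZ := z, JT := t)"]
      by simp
    show "det_eqs c0 \<phi> \<psi>"
      unfolding det_eqs_def
    proof (intro allI conjI)
      fix x y z
      show "d3x (d3x \<phi>) x y z + d3y (d3y \<phi>) x y z = 2 / c0 * d3z \<psi> x y z"
        using E[of x y z 0] c0 by simp
      have "c0^4 * (d3x (d3x \<psi>) x y z + d3y (d3y \<psi>) x y z) = 0"
        using E[of x y z 0] E[of x y z 1] by (simp add: algebra_simps)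
      then show "d3x (d3x \<psi>) x y z + d3y (d3y \<psi>) x y z = 0"
        using \<open>c0 \<noteq> 0\<close> by simp
    qed
  next
    assume D: "det_eqs c0 \<phi> \<psi>"
    show "euler_KZK c0 \<delta> \<beta> (\<lambda>u. \<phi> (u JX) (u JY) (u JZ) + u JT * \<psi> (u JX) (u JY) (u JZ)) = (\<lambda>u. 0)"
    proof
      fix u :: jet
      have "d3x (d3x \<phi>) (u JX) (u JY) (u JZ) + d3y (d3y \<phi>) (u JX) (u JY) (u JZ)
          = 2 / c0 * d3z \<psi> (u JX) (u JY) (u JZ)"
        and "d3x (d3x \<psi>) (u JX) (u JY) (u JZ) + d3y (d3y \<psi>) (u JX) (u JY) (u JZ) = 0"
        using D unfolding det_eqs_def by blast+
      then show "euler_KZK c0 \<delta> \<beta> (\<lambda>u. \<phi> (u JX) (u JY) (u JZ) + u JT * \<psi> (u JX) (u JY) (u JZ)) u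
          = 0"
        unfolding euler_KZK_affine[OF assms(2,3)]
        by (simp only: c0' mult_zero_right add_0_right diff_self)
    qed
  qed
qed

lemma multiplier_affine_in_t:
  fixes \<Lambda> :: mult
  assumes "coord_smooth (liftL \<Lambda>)" and "depends_only {JX, JY, JZ, JT} (liftL \<Lambda>)"
    and "pd JT (pd JT (liftL \<Lambda>)) = (\<lambda>u. 0)"
  shows "\<Lambda> x y z t p px py pz pt
           = \<Lambda> x y z 0 0 0 0 0 0 + t * (\<Lambda> x y z 1 0 0 0 0 0 - \<Lambda> x y z 0 0 0 0 0 0)"
proof -
  let ?v = "(\<lambda>_. 0)(JX := x, JY := y, JZ := z, JT := t)"
  have "liftL \<Lambda> ((\<lambda>_. 0)(JX := x, JY := y, JZ := z, JT := t, JP (0,0,0,0) := p, JP (1,0,0,0) := px,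
      JP (0,1,0,0) := py, JP (0,0,1,0) := pz, JP (0,0,0,1) := pt)) = liftL \<Lambda> ?v"
    by (rule assms(2)[unfolded depends_only_def, rule_format]) auto
  then have "\<Lambda> x y z t p px py pz pt = liftL \<Lambda> ?v"
    by (simp add: liftL_def)
  also have "\<dots> = liftL \<Lambda> (?v(JT := 0)) + t * jump ?v JT (liftL \<Lambda>)"
    using affine_in_coord[of "liftL \<Lambda>" JT ?v] assms(1,3)
    by (simp add: coord_smooth_imp_differentiable coord_smooth_pd)
  finally show ?thesis
    by (simp add: liftL_def jump_def)
qed

lemma coord_smooth_affine_parts:
  fixes \<Lambda> :: mult
  assumes smooth: "coord_smooth (liftL \<Lambda>)"
    and affine: "\<forall>x y z t p px py pz pt. \<Lambda> x y z t p px py pz pt = \<phi> x y z + t * \<psi> x y z"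
  shows "coord_smooth (\<lambda>u. \<phi> (u JX) (u JY) (u JZ))" and "coord_smooth (\<lambda>u. \<psi> (u JX) (u JY) (u JZ))"
proof -
  have lift: "liftL \<Lambda> = (\<lambda>u. \<phi> (u JX) (u JY) (u JZ) + u JT * \<psi> (u JX) (u JY) (u JZ))"
    by (simp add: fun_eq_iff liftL_def affine)
  have "(\<lambda>u. \<phi> (u JX) (u JY) (u JZ)) = (\<lambda>u. liftL \<Lambda> (u(JT := 0)))"
    by (simp add: lift)
  then show "coord_smooth (\<lambda>u. \<phi> (u JX) (u JY) (u JZ))"
    using coord_smooth_upd[OF smooth] by simp
  have "(\<lambda>u. \<psi> (u JX) (u JY) (u JZ)) = (\<lambda>u. liftL \<Lambda> (u(JT := 1)) - liftL \<Lambda> (u(JT := 0)))"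
    by (simp add: lift)
  then show "coord_smooth (\<lambda>u. \<psi> (u JX) (u JY) (u JZ))"
    using coord_smooth_diff[OF coord_smooth_upd[OF smooth] coord_smooth_upd[OF smooth]] by simp
qed

lemma is_multiplier_iff:
  fixes \<Lambda> :: mult
  assumes "c0 \<noteq> 0" "\<delta> \<noteq> 0" "\<beta> \<noteq> 0" and smooth: "coord_smooth (liftL \<Lambda>)"
  shows "is_multiplier c0 \<delta> \<beta> \<Lambda> \<longleftrightarrow>
    (\<exists>\<phi> \<psi>. (\<forall>x y z t p px py pz pt. \<Lambda> x y z t p px py pz pt = \<phi> x y z + t * \<psi> x y z)
      \<and> det_eqs c0 \<phi> \<psi>)"
    (is "_ \<longleftrightarrow> (\<exists>\<phi> \<psi>. ?affine \<phi> \<psi> \<and> _)")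
proof -
  have multiplier_iff: "is_multiplier c0 \<delta> \<beta> \<Lambda> \<longleftrightarrow> euler_KZK c0 \<delta> \<beta> (liftL \<Lambda>) = (\<lambda>u. 0)"
    unfolding is_multiplier_def euler_KZK_def by (simp add: fun_eq_iff)
  have affine_case: "is_multiplier c0 \<delta> \<beta> \<Lambda> \<longleftrightarrow> det_eqs c0 \<phi> \<psi>" if "?affine \<phi> \<psi>" for \<phi> \<psi>
  proof -
    have "liftL \<Lambda> = (\<lambda>u. \<phi> (u JX) (u JY) (u JZ) + u JT * \<psi> (u JX) (u JY) (u JZ))"
      by (simp add: fun_eq_iff liftL_def that)
    then show ?thesis
      using multiplier_iff euler_KZK_affine_eq_0_iff[OF \<open>c0 \<noteq> 0\<close>]
        coord_smooth_affine_parts[OF smooth that] by simp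
  qed
  have "\<exists>\<phi> \<psi>. ?affine \<phi> \<psi>" if "is_multiplier c0 \<delta> \<beta> \<Lambda>"
  proof -
    have "euler_KZK c0 \<delta> \<beta> (liftL \<Lambda>) = (\<lambda>u. 0)"
      using that multiplier_iff by simp
    note EL_0 = euler_KZK_eq_0D[OF smooth depends_only_liftL this assms(1-3)]
    show ?thesis
      by (rule exI[of _ "\<lambda>x y z. \<Lambda> x y z 0 0 0 0 0 0"],
          rule exI[of _ "\<lambda>x y z. \<Lambda> x y z 1 0 0 0 0 0 - \<Lambda> x y z 0 0 0 0 0 0"])
        (intro allI multiplier_affine_in_t[OF smooth EL_0])
  qed
  then show ?thesis
    using affine_case by blast
qed

section \<open>The conservation laws\<close>

lemma pd_xyzt_JX:
  "pd JX (\<lambda>u. q (u JX) (u JY) (u JZ) (u JT)) = (\<lambda>u. dX q (u JX) (u JY) (u JZ) (u JT))"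
  unfolding pd_def dX_def by simp

lemma pd_xyzt_JY:
  "pd JY (\<lambda>u. q (u JX) (u JY) (u JZ) (u JT)) = (\<lambda>u. dY q (u JX) (u JY) (u JZ) (u JT))"
  unfolding pd_def dY_def by simp

lemma pd_xyzt_JZ:
  "pd JZ (\<lambda>u. q (u JX) (u JY) (u JZ) (u JT)) = (\<lambda>u. dZ q (u JX) (u JY) (u JZ) (u JT))"
  unfolding pd_def dZ_def by simp

lemma pd_xyzt_JT:
  "pd JT (\<lambda>u. q (u JX) (u JY) (u JZ) (u JT)) = (\<lambda>u. dT q (u JX) (u JY) (u JZ) (u JT))"
  unfolding pd_def dT_def by simp

lemma coord_smooth_dX:
  "coord_smooth (\<lambda>u. q (u JX) (u JY) (u JZ) (u JT)) \<Longrightarrow>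
    coord_smooth (\<lambda>u. dX q (u JX) (u JY) (u JZ) (u JT))"
  by (drule coord_smooth_pd[where c = JX]) (simp only: pd_xyzt_JX)

lemma coord_smooth_dY:
  "coord_smooth (\<lambda>u. q (u JX) (u JY) (u JZ) (u JT)) \<Longrightarrow>
    coord_smooth (\<lambda>u. dY q (u JX) (u JY) (u JZ) (u JT))"
  by (drule coord_smooth_pd[where c = JY]) (simp only: pd_xyzt_JY)

lemma coord_smooth_dZ:
  "coord_smooth (\<lambda>u. q (u JX) (u JY) (u JZ) (u JT)) \<Longrightarrow>
    coord_smooth (\<lambda>u. dZ q (u JX) (u JY) (u JZ) (u JT))"
  by (drule coord_smooth_pd[where c = JZ]) (simp only: pd_xyzt_JZ)

lemma coord_smooth_dT:
  "coord_smooth (\<lambda>u. q (u JX) (u JY) (u JZ) (u JT)) \<Longrightarrow>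
    coord_smooth (\<lambda>u. dT q (u JX) (u JY) (u JZ) (u JT))"
  by (drule coord_smooth_pd[where c = JT]) (simp only: pd_xyzt_JT)

lemmas pd_xyzt_simps = pd_xyzt_JX pd_xyzt_JY pd_xyzt_JZ pd_xyzt_JT
  coord_smooth_dX coord_smooth_dY coord_smooth_dZ coord_smooth_dT

lemma dT_dT_eq_pd:
  "dT (dT q) x y z t =
    pd JT (pd JT (\<lambda>u. q (u JX) (u JY) (u JZ) (u JT)))
      ((\<lambda>_. 0)(JX := x, JY := y, JZ := z, JT := t))"
  by (simp add: pd_xyzt_JT)

lemma dT_dT_square:
  assumes "coord_smooth (\<lambda>u. p (u JX) (u JY) (u JZ) (u JT))"
  shows "dT (dT (\<lambda>x y z t. (p x y z t)^2)) x y z t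
    = 2 * (dT p x y z t)^2 + 2 * p x y z t * dT (dT p) x y z t"
  unfolding dT_dT_eq_pd power2_eq_square
  using assms
  by (simp add: pd_mult pd_const coord_smooth_imp_differentiable pd_xyzt_simps algebra_simps)

lemma KZK_conservation_law:
  fixes \<phi> \<psi> :: "real \<Rightarrow> real \<Rightarrow> real \<Rightarrow> real" and p :: "real \<Rightarrow> real \<Rightarrow> real \<Rightarrow> real \<Rightarrow> real"
  assumes "c0 \<noteq> 0" and "smooth3 \<phi>" "smooth3 \<psi>" "smooth4 p"
    and D: "det_eqs c0 \<phi> \<psi>" and K: "solves_KZK c0 \<delta> \<beta> p"
  shows "dT (Tt c0 \<delta> \<beta> \<phi> \<psi> p) x y z t + dX (Tx c0 \<phi> \<psi> p) x y z t
       + dY (Ty c0 \<phi> \<psi> p) x y z t + dZ (Tz c0 \<psi> p) x y z t = 0"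
proof -
  have p_smooth [simp]: "coord_smooth (\<lambda>u. p (u JX) (u JY) (u JZ) (u JT))"
    and [simp]: "coord_smooth (\<lambda>u. \<phi> (u JX) (u JY) (u JZ))"
    and [simp]: "coord_smooth (\<lambda>u. \<psi> (u JX) (u JY) (u JZ))"
    using assms(2-4) unfolding smooth3_def smooth4_def
    by (simp_all add: smooth_fun_imp_coord_smooth)
  let ?v = "(\<lambda>_. 0)(JX := x, JY := y, JZ := z, JT := t) :: jet"
  let ?KZK = "\<delta> * dT (dT (dT p)) x y z t
     + \<beta> * (2 * (dT p x y z t)^2 + 2 * p x y z t * dT (dT p) x y z t)
     - 2 * c0^3 * dT (dZ p) x y z t + c0^4 * (dX (dX p) x y z t + dY (dY p) x y z t)"
  have "dT (Tt c0 \<delta> \<beta> \<phi> \<psi> p) x y z t + dX (Tx c0 \<phi> \<psi> p) x y z t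
       + dY (Ty c0 \<phi> \<psi> p) x y z t + dZ (Tz c0 \<psi> p) x y z t
     = pd JT (\<lambda>u. Tt c0 \<delta> \<beta> \<phi> \<psi> p (u JX) (u JY) (u JZ) (u JT)) ?v
     + pd JX (\<lambda>u. Tx c0 \<phi> \<psi> p (u JX) (u JY) (u JZ) (u JT)) ?v
     + pd JY (\<lambda>u. Ty c0 \<phi> \<psi> p (u JX) (u JY) (u JZ) (u JT)) ?v
     + pd JZ (\<lambda>u. Tz c0 \<psi> p (u JX) (u JY) (u JZ) (u JT)) ?v"
    by (simp add: pd_xyzt_simps)
  also have "\<dots> = (\<phi> x y z + t * \<psi> x y z) * ?KZK
     - c0^4 * p x y z t * (d3x (d3x \<phi>) x y z + d3y (d3y \<phi>) x y z - (2 / c0) * d3z \<psi> x y z)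
     - c0^4 * t * p x y z t * (d3x (d3x \<psi>) x y z + d3y (d3y \<psi>) x y z)"
    unfolding Tt_def Tx_def Ty_def Tz_def
    using \<open>c0 \<noteq> 0\<close>
    by (simp add: pd_add pd_diff pd_mult coord_smooth_imp_differentiable pd_coord pd_const
        pd_xyzt_simps pd_xyz_simps power2_eq_square field_simps eval_nat_numeral)
  also have "\<dots> = 0"
    using K D unfolding solves_KZK_def det_eqs_def dT_dT_square[OF p_smooth] by simp
  finally show ?thesis .
qed

lemma smooth_fun_const: "smooth_fun (\<lambda>u::jet. k)"
proof -
  have "foldr pd cs (\<lambda>u::jet. k) = (\<lambda>u. if cs = [] then k else 0)" for cs
    by (induction cs) (auto simp: pd_const)
  then show ?thesis
    unfolding smooth_fun_def by (auto intro: exI[of _ "{}"])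
qed

lemma infinite_multipliers:
  assumes "c0 \<noteq> 0" "\<delta> \<noteq> 0" "\<beta> \<noteq> 0"
  shows "infinite {\<Lambda> :: mult. smooth_fun (liftL \<Lambda>) \<and> is_multiplier c0 \<delta> \<beta> \<Lambda>}"
proof -
  define const :: "real \<Rightarrow> mult" where "const a = (\<lambda>x y z t p px py pz pt. a)" for a
  have "const a \<in> {\<Lambda>. smooth_fun (liftL \<Lambda>) \<and> is_multiplier c0 \<delta> \<beta> \<Lambda>}" for a
  proof -
    have smooth: "smooth_fun (liftL (const a))"
      unfolding const_def liftL_def by (rule smooth_fun_const)
    have "det_eqs c0 (\<lambda>x y z. a) (\<lambda>x y z. 0)"
      unfolding det_eqs_def d3x_def d3y_def d3z_def by simp
    then have "\<exists>\<phi> \<psi>. (\<forall>x y z t p px py pz pt. const a x y z t p px py pz pt = \<phi> x y z + t * \<psi> x y z)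
        \<and> det_eqs c0 \<phi> \<psi>"
      by (intro exI[of _ "\<lambda>x y z. a"] exI[of _ "\<lambda>x y z. 0"]) (simp add: const_def)
    then have "is_multiplier c0 \<delta> \<beta> (const a)"
      using is_multiplier_iff[OF assms smooth_fun_imp_coord_smooth[OF smooth]] by blast
    with smooth show ?thesis by simp
  qed
  moreover have "inj const"
    by (rule injI) (metis const_def)
  then have "infinite (range const)"
    using infinite_UNIV_char_0 finite_imageD by blast
  ultimately show ?thesis
    by (metis (no_types, lifting) image_subset_iff infinite_super)
qed

theorem mainTheorem3:
  fixes c0 \<delta> \<beta> :: real
  assumes "c0 > 0" and "\<delta> > 0" and "\<beta> > 0"
  shows "(\<forall>\<Lambda> :: mult. smooth_fun (liftL \<Lambda>) \<longrightarrow>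
            (is_multiplier c0 \<delta> \<beta> \<Lambda> \<longleftrightarrow>
              (\<exists>\<phi> \<psi>. (\<forall>x y z t p px py pz pt. \<Lambda> x y z t p px py pz pt = \<phi> x y z + t * \<psi> x y z)
                      \<and> det_eqs c0 \<phi> \<psi>)))
       \<and> (\<forall>\<phi> \<psi> p. smooth3 \<phi> \<and> smooth3 \<psi> \<and> det_eqs c0 \<phi> \<psi> \<and> smooth4 p \<and> solves_KZK c0 \<delta> \<beta> p \<longrightarrow>
            (\<forall>x y z t. dT (Tt c0 \<delta> \<beta> \<phi> \<psi> p) x y z t + dX (Tx c0 \<phi> \<psi> p) x y z t
                      + dY (Ty c0 \<phi> \<psi> p) x y z t + dZ (Tz c0 \<psi> p) x y z t = 0))
       \<and> infinite {\<Lambda> :: mult. smooth_fun (liftL \<Lambda>) \<and> is_multiplier c0 \<delta> \<beta> \<Lambda>}"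
proof -
  from assms have nonzero: "c0 \<noteq> 0" "\<delta> \<noteq> 0" "\<beta> \<noteq> 0"
    by auto
  have "is_multiplier c0 \<delta> \<beta> \<Lambda> \<longleftrightarrow>
      (\<exists>\<phi> \<psi>. (\<forall>x y z t p px py pz pt. \<Lambda> x y z t p px py pz pt = \<phi> x y z + t * \<psi> x y z)
        \<and> det_eqs c0 \<phi> \<psi>)"
    if "smooth_fun (liftL \<Lambda>)" for \<Lambda> :: mult
    using is_multiplier_iff[OF nonzero smooth_fun_imp_coord_smooth[OF that]] .
  then show ?thesis
    using KZK_conservation_law[OF nonzero(1)] infinite_multipliers[OF nonzero] by blast
qed

end
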